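(* Let $0<p<1/2$, let $m$ be a bounded generating sequence, and let $\varphi:\mathbb{N}\to[1,\infty)$ be a nondecreasing function such that $$\limsup_{n\to\infty}\frac{(n+1)^{1/p-2}}{\varphi(n)}=+\infty.$$ Then $$\sup_{f\in H_p(G_m),\ \|f\|_{H_p}\le 1}\ \sup_{n\in\mathbb{N}_+}\Big\|\frac{\sigma_nf}{\varphi(n)}\Big\|_{L_{p,\infty}(G_m)}=\infty .$$ In particular the maximal operator $f\mapsto\sup_{n}|\sigma_nf|/\varphi(n)$ is not bounded from $H_p(G_m)$ to $L_{p,\infty}(G_m)$.
   Context: Let $m=(m_0,m_1,\dots)$ be a sequence of integers $m_k\ge 2$ with $\sup_k m_k<\infty$ (bounded Vilenkin group). $Z_{m_k}=\{0,1,\dots,m_k-1\}$ is the additive group of integers mod $m_k$, and $G_m=\prod_k Z_{m_k}$ is the complete direct product, with elements $x=(x_0,x_1,\dots)$, $x_k\in Z_{m_k}$, product topology, and Haar measure $\mu$ = product of the uniform measures $\mu_k(\{j\})=1/m_k$. Set $M_0=1$, $M_{k+1}=m_kM_k$; every $n\in\mathbb{N}$ is uniquely $n=\sum_j n_jM_j$ with $n_j\in Z_{m_j}$. For $n\ge1$, $I_n(x)=\{y\in G_m: y_j=x_j,\ j<n\}$, $I_0(x)=G_m$. The generalized Rademacher functions are $r_k(x)=\exp(2\pi i x_k/m_k)$ and the Vilenkin system is $\psi_n=\prod_k r_k^{n_k}$. $\digamma_n$ is the $\sigma$-algebra generated by the intervals $I_n(x)$. A martingale $f=(f^{(n)})$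 is with respect to $(\digamma_n)$; $f^*=\sup_n|f^{(n)}|$, and $H_p(G_m)$ consists of martingales with $\|f\|_{H_p}:=\|f^*\|_{L_p}<\infty$. Fourier coefficients of a martingale are $\widehat f(i)=\lim_{k\to\infty}\int_{G_m}f^{(k)}\overline{\psi_i}\,d\mu$; $S_nf=\sum_{k=0}^{n-1}\widehat f(k)\psi_k$ ($S_0f=0$), $\sigma_nf=\frac1n\sum_{k=0}^{n-1}S_kf$. The weak space $L_{p,\infty}(G_m)$ has quasinorm $\|g\|_{L_{p,\infty}}=\big(\sup_{\lambda>0}\lambda^p\mu(|g|>\lambda)\big)^{1/p}$. *)

theory Defs
  imports "HOL-Probability.Probability"
begin

definition Gm :: "(nat \<Rightarrow> nat) \<Rightarrow> (nat \<Rightarrow> nat) measure" where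
  "Gm m = (\<Pi>\<^sub>M k\<in>UNIV. uniform_count_measure {..<m k})"

definition bounded_generating :: "(nat \<Rightarrow> nat) \<Rightarrow> bool" where
  "bounded_generating m \<longleftrightarrow> (\<forall>k. 2 \<le> m k) \<and> bdd_above (range m)"

definition Mk :: "(nat \<Rightarrow> nat) \<Rightarrow> nat \<Rightarrow> nat" where
  "Mk m k = (\<Prod>i<k. m i)"

(* the digit n_j in n = sum_j n_j M_j *)
definition digit :: "(nat \<Rightarrow> nat) \<Rightarrow> nat \<Rightarrow> nat \<Rightarrow> nat" where
  "digit m n j = (n div Mk m j) mod m j"

definition rademacher :: "(nat \<Rightarrow> nat) \<Rightarrow> nat \<Rightarrow> (nat \<Rightarrow> nat) \<Rightarrow> complex" where
  "rademacher m k x = cis (2 * pi * real (x k) / real (m k))"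

(* psi_n = prod_k r_k^{n_k}; the digits n_k vanish for k >= n since M_k >= 2^k > n *)
definition vilenkin :: "(nat \<Rightarrow> nat) \<Rightarrow> nat \<Rightarrow> (nat \<Rightarrow> nat) \<Rightarrow> complex" where
  "vilenkin m n x = (\<Prod>k<n. rademacher m k x ^ digit m n k)"

definition Interval :: "(nat \<Rightarrow> nat) \<Rightarrow> nat \<Rightarrow> (nat \<Rightarrow> nat) \<Rightarrow> (nat \<Rightarrow> nat) set" where
  "Interval m n x = {y \<in> space (Gm m). \<forall>j<n. y j = x j}"

definition Fn :: "(nat \<Rightarrow> nat) \<Rightarrow> nat \<Rightarrow> (nat \<Rightarrow> nat) measure" where
  "Fn m n = sigma (space (Gm m)) {Interval m n x | x. x \<in> space (Gm m)}"

definition martingale :: "(nat \<Rightarrow> nat) \<Rightarrow> (nat \<Rightarrow> (nat \<Rightarrow> nat) \<Rightarrow> complex) \<Rightarrow> bool" where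
  "martingale m f \<longleftrightarrow>
     (\<forall>n. f n \<in> borel_measurable (Fn m n) \<and> integrable (Gm m) (f n)) \<and>
     (\<forall>n. \<forall>A \<in> sets (Fn m n).
        (LINT x:A|Gm m. f (Suc n) x) = (LINT x:A|Gm m. f n x))"

(* x^r on [0,\<infinity>] for r > 0 *)
definition ennpow :: "ennreal \<Rightarrow> real \<Rightarrow> ennreal" where
  "ennpow x r = (if x = \<infinity> then \<infinity> else ennreal (enn2real x powr r))"

definition maxfun :: "(nat \<Rightarrow> (nat \<Rightarrow> nat) \<Rightarrow> complex) \<Rightarrow> (nat \<Rightarrow> nat) \<Rightarrow> ennreal" where
  "maxfun f x = (SUP n. ennreal (cmod (f n x)))"

definition Hp_norm :: "(nat \<Rightarrow> nat) \<Rightarrow> real \<Rightarrow> (nat \<Rightarrow> (nat \<Rightarrow> nat) \<Rightarrow> complex) \<Rightarrow> ennreal" where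
  "Hp_norm m p f = ennpow (\<integral>\<^sup>+ x. ennpow (maxfun f x) p \<partial>Gm m) (1 / p)"

definition fourier_coeff :: "(nat \<Rightarrow> nat) \<Rightarrow> (nat \<Rightarrow> (nat \<Rightarrow> nat) \<Rightarrow> complex) \<Rightarrow> nat \<Rightarrow> complex" where
  "fourier_coeff m f i = lim (\<lambda>k. LINT x|Gm m. f k x * cnj (vilenkin m i x))"

definition partial_sum :: "(nat \<Rightarrow> nat) \<Rightarrow> (nat \<Rightarrow> (nat \<Rightarrow> nat) \<Rightarrow> complex) \<Rightarrow> nat \<Rightarrow> (nat \<Rightarrow> nat) \<Rightarrow> complex" where
  "partial_sum m f n x = (\<Sum>k<n. fourier_coeff m f k * vilenkin m k x)"

definition fejer_mean :: "(nat \<Rightarrow> nat) \<Rightarrow> (nat \<Rightarrow> (nat \<Rightarrow> nat) \<Rightarrow> complex) \<Rightarrow> nat \<Rightarrow> (nat \<Rightarrow> nat) \<Rightarrow> complex" where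
  "fejer_mean m f n x = (\<Sum>k<n. partial_sum m f k x) / of_nat n"

definition weak_Lp_norm :: "'a measure \<Rightarrow> real \<Rightarrow> ('a \<Rightarrow> complex) \<Rightarrow> ennreal" where
  "weak_Lp_norm M p g = ennpow (SUP t\<in>{0<..}. ennreal (t powr p) * emeasure M {x \<in> space M. t < cmod (g x)}) (1 / p)"

end

theory Submission
  imports Defs
begin

text \<open>For each \<open>k\<close> take the atom \<open>a\<^sub>k = M\<^sub>k\<^sup>1\<^sup>/\<^sup>p \<one>\<^bsub>I\<^sub>k(0)\<^esub> r\<^sub>k\<close>, a martingale of
  \<open>H\<^sub>p\<close>-norm one. Its Fourier coefficients vanish below \<open>M\<^sub>k\<close> (the characters \<open>\<psi>\<^sub>i\<close>, \<open>i < M\<^sub>k\<close>,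
  depend only on the first \<open>k\<close> coordinates, and \<open>r\<^sub>k\<close> averages to zero against such functions)
  and equal \<open>M\<^sub>k\<^sup>1\<^sup>/\<^sup>p\<^sup>-\<^sup>1\<close> at \<open>M\<^sub>k\<close>. Hence \<open>\<sigma>\<^bsub>M\<^sub>k+2\<^esub> a\<^sub>k = M\<^sub>k\<^sup>1\<^sup>/\<^sup>p\<^sup>-\<^sup>1 r\<^sub>k / (M\<^sub>k + 2)\<close> has
  modulus of order \<open>M\<^sub>k\<^sup>1\<^sup>/\<^sup>p\<^sup>-\<^sup>2\<close> on the whole group, so its weak quasinorm divided by
  \<open>\<phi>(M\<^sub>k + 2)\<close> is at least of order \<open>M\<^sub>k\<^sup>1\<^sup>/\<^sup>p\<^sup>-\<^sup>2 / \<phi>(M\<^sub>k + 2)\<close>. Since \<open>M\<^sub>k\<^sub>+\<^sub>1 \<le> (sup m) M\<^sub>k\<close>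
  and \<open>\<phi>\<close> is nondecreasing, the \<open>limsup\<close> hypothesis makes these bounds unbounded in \<open>k\<close>.\<close>

section \<open>Functions of finitely many coordinates\<close>

lemma space_Gm: "space (Gm m) = {x. \<forall>k. x k < m k}"
  by (auto simp: Gm_def space_PiM space_uniform_count_measure PiE_def extensional_def)

lemma product_prob_space_Gm_factors:
  fixes m :: "nat \<Rightarrow> nat"
  assumes "\<And>k. 0 < m k"
  shows "product_prob_space (\<lambda>k. uniform_count_measure {..<m k})"
proof -
  have "prob_space (uniform_count_measure {..<m k})" for k
    using assms[of k] by (intro prob_space_uniform_count_measure) auto
  then show ?thesis
    unfolding product_prob_space_def product_prob_space_axioms_def product_sigma_finite_def
    using prob_space_imp_sigma_finite by blast
qed

lemma prob_space_Gm:
  fixes m :: "nat \<Rightarrow> nat"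
  assumes "\<And>k. 0 < m k"
  shows "prob_space (Gm m)"
proof -
  interpret product_prob_space "\<lambda>k. uniform_count_measure {..<m k}" UNIV
    by (rule product_prob_space_Gm_factors[OF assms])
  show ?thesis
    unfolding Gm_def by unfold_locales
qed

lemma Interval_eq_prod_emb:
  "Interval m N z =
     prod_emb UNIV (\<lambda>k. uniform_count_measure {..<m k}) {..<N} (\<Pi>\<^sub>E j\<in>{..<N}. {z j})"
  by (auto simp: Interval_def prod_emb_def space_Gm space_PiM space_uniform_count_measure
      PiE_def extensional_def Pi_iff)

lemma Interval_in_sets:
  assumes "z \<in> space (Gm m)"
  shows "Interval m N z \<in> sets (Gm m)"
  unfolding Interval_eq_prod_emb Gm_def using assms
  by (intro sets_PiM_I) (auto simp: space_Gm sets_uniform_count_measure)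

lemma Mk_pos: "(\<And>k. 0 < m k) \<Longrightarrow> 0 < Mk m N"
  by (auto simp: Mk_def)

lemma emeasure_Interval:
  assumes "\<And>k. 0 < m k" and "z \<in> space (Gm m)"
  shows "emeasure (Gm m) (Interval m N z) = ennreal (1 / real (Mk m N))"
proof -
  interpret product_prob_space "\<lambda>k. uniform_count_measure {..<m k}" UNIV
    by (rule product_prob_space_Gm_factors[OF assms(1)])
  have "emeasure (Gm m) (Interval m N z) =
      (\<Prod>j<N. emeasure (uniform_count_measure {..<m j}) {z j})"
    unfolding Interval_eq_prod_emb Gm_def using assms(2)
    by (intro emeasure_PiM_emb) (auto simp: space_Gm sets_uniform_count_measure)
  also have "\<dots> = (\<Prod>j<N. ennreal (1 / real (m j)))"
    using assms(2)
    by (intro prod.cong refl)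
      (auto simp: emeasure_uniform_count_measure space_Gm ennreal_of_nat_eq_real_of_nat divide_ennreal)
  also have "\<dots> = ennreal (1 / real (Mk m N))"
    by (simp add: prod_ennreal Mk_def prod_dividef)
  finally show ?thesis .
qed

lemma sets_Fn: "sets (Fn m N) = sigma_sets (space (Gm m)) {Interval m N x | x. x \<in> space (Gm m)}"
  unfolding Fn_def by (rule sets_measure_of) (auto simp: Interval_def)

lemma space_Fn: "space (Fn m N) = space (Gm m)"
  unfolding Fn_def by (rule space_measure_of) (auto simp: Interval_def)

definition depends_on_prefix :: "(nat \<Rightarrow> nat) \<Rightarrow> nat \<Rightarrow> ((nat \<Rightarrow> nat) \<Rightarrow> 'b) \<Rightarrow> bool" where
  "depends_on_prefix m N h \<longleftrightarrow>
     (\<forall>x\<in>space (Gm m). \<forall>y\<in>space (Gm m). (\<forall>j<N. x j = y j) \<longrightarrow> h x = h y)"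

text \<open>One representative for each interval \<open>I\<^sub>N(x)\<close>.\<close>

definition prefix_points :: "(nat \<Rightarrow> nat) \<Rightarrow> nat \<Rightarrow> (nat \<Rightarrow> nat) set" where
  "prefix_points m N = {x \<in> space (Gm m). \<forall>j\<ge>N. x j = 0}"

definition truncate :: "nat \<Rightarrow> (nat \<Rightarrow> nat) \<Rightarrow> nat \<Rightarrow> nat" where
  "truncate N x = (\<lambda>j. if j < N then x j else 0)"

lemma depends_on_prefixD:
  "depends_on_prefix m N h \<Longrightarrow> x \<in> space (Gm m) \<Longrightarrow> y \<in> space (Gm m) \<Longrightarrow>
    (\<And>j. j < N \<Longrightarrow> x j = y j) \<Longrightarrow> h x = h y"
  unfolding depends_on_prefix_def by blast

lemma depends_on_prefix_mono:
  "depends_on_prefix m N h \<Longrightarrow> N \<le> N' \<Longrightarrow> depends_on_prefix m N' h"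
  unfolding depends_on_prefix_def by (meson order_less_le_trans)

lemma depends_on_prefix_comp:
  "depends_on_prefix m N h \<Longrightarrow> depends_on_prefix m N (\<lambda>x. f (h x))"
  unfolding depends_on_prefix_def by metis

lemma depends_on_prefix_mult:
  fixes g h :: "(nat \<Rightarrow> nat) \<Rightarrow> 'a :: times"
  shows "depends_on_prefix m N g \<Longrightarrow> depends_on_prefix m N h \<Longrightarrow>
    depends_on_prefix m N (\<lambda>x. g x * h x)"
  unfolding depends_on_prefix_def by metis

lemma finite_prefix_points: "finite (prefix_points m N)"
proof (rule finite_subset)
  let ?B = "\<Sum>j<N. m j"
  have "m j \<le> ?B" if "j < N" for j
    using that by (intro member_le_sum) auto
  then show "prefix_points m N \<subseteq> {f. \<forall>x. (x \<in> {..<N} \<longrightarrow> f x \<in> {..<?B}) \<and> (x \<notin> {..<N} \<longrightarrow> f x = 0)}"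
    by (auto simp: prefix_points_def space_Gm intro: less_le_trans)
qed (intro finite_set_of_finite_funs; auto)

lemma truncate_in_prefix_points:
  "(\<And>k. 0 < m k) \<Longrightarrow> x \<in> space (Gm m) \<Longrightarrow> truncate N x \<in> prefix_points m N"
  by (auto simp: truncate_def prefix_points_def space_Gm)

lemma mem_Interval_iff_truncate:
  "z \<in> prefix_points m N \<Longrightarrow> x \<in> space (Gm m) \<Longrightarrow> x \<in> Interval m N z \<longleftrightarrow> truncate N x = z"
  by (auto simp: Interval_def prefix_points_def truncate_def fun_eq_iff)

lemma depends_on_prefix_truncate:
  assumes "\<And>k. 0 < m k" and "depends_on_prefix m N h" and "x \<in> space (Gm m)"
  shows "h (truncate N x) = h x"
  using truncate_in_prefix_points[OF assms(1,3)] assms(3)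
  by (intro depends_on_prefixD[OF assms(2)]) (auto simp: truncate_def prefix_points_def)

lemma vimage_depends_on_prefix:
  assumes "\<And>k. 0 < m k" and "depends_on_prefix m N h"
  shows "h -` B \<inter> space (Gm m) = (\<Union>z\<in>{z \<in> prefix_points m N. h z \<in> B}. Interval m N z)"
proof (intro set_eqI iffI)
  fix x assume x: "x \<in> h -` B \<inter> space (Gm m)"
  then have "truncate N x \<in> {z \<in> prefix_points m N. h z \<in> B}" "x \<in> Interval m N (truncate N x)"
    using truncate_in_prefix_points[OF assms(1)] depends_on_prefix_truncate[OF assms]
      mem_Interval_iff_truncate[OF truncate_in_prefix_points[OF assms(1)]] by auto
  then show "x \<in> (\<Union>z\<in>{z \<in> prefix_points m N. h z \<in> B}. Interval m N z)" by blast
next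
  fix x assume "x \<in> (\<Union>z\<in>{z \<in> prefix_points m N. h z \<in> B}. Interval m N z)"
  then obtain z where z: "z \<in> prefix_points m N" "h z \<in> B" "x \<in> Interval m N z" by blast
  then have x: "x \<in> space (Gm m)" by (auto simp: Interval_def)
  with z have "h x = h z"
    using depends_on_prefix_truncate[OF assms x] mem_Interval_iff_truncate by metis
  with z x show "x \<in> h -` B \<inter> space (Gm m)" by simp
qed

lemma measurable_depends_on_prefix_Gm:
  assumes "\<And>k. 0 < m k" and "depends_on_prefix m N h"
  shows "h \<in> measurable (Gm m) (count_space UNIV)"
proof (rule measurableI)
  fix B
  show "h -` B \<inter> space (Gm m) \<in> sets (Gm m)"
    unfolding vimage_depends_on_prefix[OF assms]
    by (intro sets.finite_UN rev_finite_subset[OF finite_prefix_points])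
      (auto simp: prefix_points_def intro: Interval_in_sets)
qed auto

lemma measurable_depends_on_prefix_Fn:
  assumes "\<And>k. 0 < m k" and "depends_on_prefix m N h"
  shows "h \<in> measurable (Fn m N) (count_space UNIV)"
proof (rule measurableI)
  fix B
  show "h -` B \<inter> space (Fn m N) \<in> sets (Fn m N)"
    unfolding space_Fn vimage_depends_on_prefix[OF assms]
    by (intro sets.finite_UN rev_finite_subset[OF finite_prefix_points])
      (auto simp: sets_Fn prefix_points_def)
qed auto

lemma measurable_count_space_imp_borel:
  "h \<in> measurable M (count_space UNIV) \<Longrightarrow> (h :: _ \<Rightarrow> 'b::topological_space) \<in> borel_measurable M"
  by (rule measurable_compose[OF _ measurable_count_space_eq1[THEN iffD2]]) auto

lemma depends_on_prefix_mem_Fn: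
  assumes "A \<in> sets (Fn m N)"
  shows "depends_on_prefix m N (\<lambda>x. x \<in> A)"
  using assms unfolding sets_Fn
proof (induction rule: sigma_sets.induct)
  case (Basic a)
  then show ?case by (auto simp: depends_on_prefix_def Interval_def)
next
  case Empty
  then show ?case by (simp add: depends_on_prefix_def)
next
  case (Compl a)
  show ?case
    unfolding depends_on_prefix_def
  proof (intro ballI impI)
    fix x y assume "x \<in> space (Gm m)" "y \<in> space (Gm m)" "\<forall>j<N. x j = y j"
    with depends_on_prefixD[OF Compl.IH, of x y] show "x \<in> space (Gm m) - a \<longleftrightarrow> y \<in> space (Gm m) - a"
      by blast
  qed
next
  case (Union a)
  show ?case
    unfolding depends_on_prefix_def
  proof (intro ballI impI)
    fix x y assume "x \<in> space (Gm m)" "y \<in> space (Gm m)" "\<forall>j<N. x j = y j"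
    with depends_on_prefixD[OF Union.IH, where x=x and y=y] show "x \<in> \<Union> (range a) \<longleftrightarrow> y \<in> \<Union> (range a)"
      by blast
  qed
qed

lemma integral_depends_on_prefix:
  fixes h :: "(nat \<Rightarrow> nat) \<Rightarrow> 'a :: {banach, second_countable_topology}"
  assumes m: "\<And>k. 0 < m k" and h: "depends_on_prefix m N h"
  shows "integral\<^sup>L (Gm m) h = (1 / real (Mk m N)) *\<^sub>R (\<Sum>z\<in>prefix_points m N. h z)"
proof -
  interpret prob_space "Gm m" by (rule prob_space_Gm[OF m])
  have z_space: "z \<in> prefix_points m N \<Longrightarrow> z \<in> space (Gm m)" for z
    by (simp add: prefix_points_def)
  have ind_integrable: "integrable (Gm m) (indicator (Interval m N z) :: _ \<Rightarrow> real)"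
    if "z \<in> prefix_points m N" for z
    using emeasure_Interval[OF m z_space[OF that], of N]
    by (intro integrable_real_indicator Interval_in_sets z_space[OF that]) auto
  have integral_ind: "integral\<^sup>L (Gm m) (indicator (Interval m N z)) = 1 / real (Mk m N)"
    if "z \<in> prefix_points m N" for z
    using emeasure_Interval[OF m z_space[OF that], of N] Interval_in_sets[OF z_space[OF that], of N]
    by (simp add: measure_def Int_absorb2 sets.sets_into_space)
  have "integral\<^sup>L (Gm m) h =
      integral\<^sup>L (Gm m) (\<lambda>x. \<Sum>z\<in>prefix_points m N. indicator (Interval m N z) x *\<^sub>R h z)"
  proof (rule Bochner_Integration.integral_cong[OF refl])
    fix x assume x: "x \<in> space (Gm m)"
    have "(\<Sum>z\<in>prefix_points m N. indicator (Interval m N z) x *\<^sub>R h z) =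
        (\<Sum>z\<in>prefix_points m N. if truncate N x = z then h z else 0)"
      using mem_Interval_iff_truncate[OF _ x] by (intro sum.cong refl) (auto simp: indicator_def)
    also have "\<dots> = h x"
      using finite_prefix_points truncate_in_prefix_points[OF m x] depends_on_prefix_truncate[OF m h x]
      by simp
    finally show "h x = (\<Sum>z\<in>prefix_points m N. indicator (Interval m N z) x *\<^sub>R h z)" ..
  qed
  also have "\<dots> = (\<Sum>z\<in>prefix_points m N. (1 / real (Mk m N)) *\<^sub>R h z)"
    using ind_integrable integral_ind by (simp add: integral_scaleR_left)
  finally show ?thesis
    by (simp add: scaleR_sum_right)
qed

section \<open>Orthogonality of the generalized Rademacher functions\<close>

lemma cis_2pi_mod:
  assumes "0 < n"
  shows "cis (2 * pi * real (a mod n) / real n) = cis (2 * pi * real a / real n)"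
proof -
  have "real a = real (a mod n) + real n * real (a div n)"
    by (simp flip: of_nat_mult of_nat_add)
  then have "2 * pi * real a / real n = 2 * pi * real (a mod n) / real n + 2 * pi * real (a div n)"
    using assms by (simp add: field_simps)
  then show ?thesis
    by (simp add: cis_mult[symmetric])
qed

lemma cis_2pi_div_neq_1:
  assumes "2 \<le> n"
  shows "cis (2 * pi / real n) \<noteq> 1"
proof -
  have "cis (2 * pi / real n) = exp (2 * of_real pi * \<i> * of_nat 1 / of_nat n)"
    by (simp add: cis_conv_exp mult_ac)
  then show ?thesis
    using complex_root_unity_eq_1[of n 1] assms by simp
qed

lemma Suc_mod_eq_imp_eq: "a < n \<Longrightarrow> b < n \<Longrightarrow> Suc a mod n = Suc b mod n \<Longrightarrow> a = b"
  by (simp add: mod_Suc split: if_splits)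

definition coord_shift :: "(nat \<Rightarrow> nat) \<Rightarrow> nat \<Rightarrow> (nat \<Rightarrow> nat) \<Rightarrow> nat \<Rightarrow> nat" where
  "coord_shift m k z = z(k := Suc (z k) mod m k)"

lemma bij_betw_coord_shift:
  assumes "\<And>k. 0 < m k" and "k < N"
  shows "bij_betw (coord_shift m k) (prefix_points m N) (prefix_points m N)"
proof -
  have into: "coord_shift m k ` prefix_points m N \<subseteq> prefix_points m N"
    using assms by (auto simp: coord_shift_def prefix_points_def space_Gm)
  have "inj_on (coord_shift m k) (prefix_points m N)"
  proof (rule inj_onI)
    fix x y assume "x \<in> prefix_points m N" "y \<in> prefix_points m N"
      and eq: "coord_shift m k x = coord_shift m k y"
    then have "x k < m k" "y k < m k"
      by (simp_all add: prefix_points_def space_Gm)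
    moreover have "Suc (x k) mod m k = Suc (y k) mod m k"
      using fun_cong[OF eq, of k] by (simp add: coord_shift_def)
    ultimately have "x k = y k"
      by (rule Suc_mod_eq_imp_eq)
    show "x = y"
    proof
      fix j
      show "x j = y j"
        using fun_cong[OF eq, of j] \<open>x k = y k\<close> by (cases "j = k") (simp_all add: coord_shift_def)
    qed
  qed
  with endo_inj_surj[OF finite_prefix_points into] show ?thesis
    by (simp add: bij_betw_def)
qed

lemma rademacher_coord_shift:
  assumes "0 < m k"
  shows "rademacher m k (coord_shift m k z) = cis (2 * pi / real (m k)) * rademacher m k z"
proof -
  have "rademacher m k (coord_shift m k z) = cis (2 * pi * real (Suc (z k)) / real (m k))"
    using assms by (simp add: rademacher_def coord_shift_def cis_2pi_mod)
  also have "2 * pi * real (Suc (z k)) / real (m k) = 2 * pi / real (m k) + 2 * pi * real (z k) / real (m k)"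
    by (simp add: distrib_left add_divide_distrib)
  finally show ?thesis
    by (simp add: rademacher_def cis_mult)
qed

lemma depends_on_prefix_rademacher: "depends_on_prefix m (Suc k) (rademacher m k)"
  unfolding depends_on_prefix_def rademacher_def by (metis lessI)

text \<open>The shift of the \<open>k\<close>-th coordinate permutes the representatives of the intervals
  \<open>I\<^sub>k\<^sub>+\<^sub>1(x)\<close>, fixes \<open>h\<close> and multiplies \<open>r\<^sub>k\<close> by a root of unity \<open>\<omega> \<noteq> 1\<close>; so the average
  of \<open>h r\<^sub>k\<close> equals \<open>\<omega>\<close> times itself.\<close>

lemma integral_mult_rademacher_eq_0:
  fixes h :: "(nat \<Rightarrow> nat) \<Rightarrow> complex"
  assumes m2: "\<And>k. 2 \<le> m k" and h: "depends_on_prefix m k h"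
  shows "integral\<^sup>L (Gm m) (\<lambda>x. h x * rademacher m k x) = 0"
proof -
  have m: "0 < m j" for j using m2[of j] by simp
  let ?P = "prefix_points m (Suc k)"
  let ?F = "\<lambda>x. h x * rademacher m k x"
  define \<omega> where "\<omega> = cis (2 * pi / real (m k))"
  have bij: "bij_betw (coord_shift m k) ?P ?P"
    using m by (rule bij_betw_coord_shift) simp
  have F_shift: "?F (coord_shift m k z) = \<omega> * ?F z" if "z \<in> ?P" for z
  proof -
    have "z \<in> space (Gm m)" "coord_shift m k z \<in> space (Gm m)"
      using that bij_betw_apply[OF bij that] by (simp_all add: prefix_points_def)
    then have "h (coord_shift m k z) = h z"
      by (intro depends_on_prefixD[OF h]) (simp_all add: coord_shift_def)
    then show ?thesis
      by (simp add: rademacher_coord_shift[of m k, OF m] \<omega>_def)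
  qed
  have "(\<Sum>z\<in>?P. ?F z) = (\<Sum>z\<in>?P. ?F (coord_shift m k z))"
    using sum.reindex_bij_betw[OF bij, of ?F] by simp
  also have "\<dots> = \<omega> * (\<Sum>z\<in>?P. ?F z)"
    by (simp add: F_shift sum_distrib_left)
  finally have "(1 - \<omega>) * (\<Sum>z\<in>?P. ?F z) = 0"
    by (simp add: algebra_simps)
  moreover have "\<omega> \<noteq> 1"
    unfolding \<omega>_def by (rule cis_2pi_div_neq_1[OF m2])
  moreover have F: "depends_on_prefix m (Suc k) ?F"
    using depends_on_prefix_mono[OF h] depends_on_prefix_rademacher
    by (intro depends_on_prefix_mult) simp_all
  ultimately show ?thesis
    using integral_depends_on_prefix[of m, OF m F] by simp
qed

section \<open>The characters \<open>\<psi>\<^sub>i\<close> for \<open>i \<le> M\<^sub>k\<close>\<close>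

lemma Mk_Suc: "Mk m (Suc j) = m j * Mk m j"
  by (simp add: Mk_def)

lemma Mk_split:
  assumes "j \<le> k"
  shows "Mk m k = Mk m j * prod m {j..<k}"
proof -
  have "{..<k} = {..<j} \<union> {j..<k}"
    using assms by auto
  then show ?thesis
    unfolding Mk_def by (simp add: prod.union_disjoint ivl_disj_int)
qed

lemma strict_mono_Mk:
  assumes "\<And>k. 2 \<le> m k"
  shows "strict_mono (Mk m)"
proof (rule strict_mono_Suc_iff[THEN iffD2], intro allI)
  fix j
  have "0 < Mk m j" using assms by (intro Mk_pos) (metis less_le_trans pos2)
  then show "Mk m j < Mk m (Suc j)"
    using assms[of j] by (simp add: Mk_Suc)
qed

lemma less_Mk:
  assumes "\<And>k. 2 \<le> m k"
  shows "j < Mk m j"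
proof (induction j)
  case 0
  then show ?case by (simp add: Mk_def)
next
  case (Suc j)
  then show ?case
    using strict_monoD[OF strict_mono_Mk[of m, OF assms], of j "Suc j"] by simp
qed

lemma digit_eq_0_if_less_Mk:
  assumes "\<And>k. 2 \<le> m k" and "i < Mk m k" and "k \<le> j"
  shows "digit m i j = 0"
  using assms strict_mono_less_eq[OF strict_mono_Mk[of m, OF assms(1)], of k j]
  by (simp add: digit_def)

lemma digit_Mk:
  assumes m2: "\<And>k. 2 \<le> m k"
  shows "digit m (Mk m k) j = (if j = k then 1 else 0)"
proof (cases j k rule: linorder_cases)
  case less
  have "0 < Mk m j" using m2 by (intro Mk_pos) (metis less_le_trans pos2)
  then have "Mk m k div Mk m j = prod m {j..<k}"
    using Mk_split[of j k m] less by simp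
  moreover have "m j dvd prod m {j..<k}"
    using less by (intro dvd_prodI) auto
  ultimately show ?thesis
    using less by (simp add: digit_def)
next
  case equal
  have "0 < Mk m j" using m2 by (intro Mk_pos) (metis less_le_trans pos2)
  then show ?thesis
    using equal m2[of k] by (simp add: digit_def)
next
  case greater
  then show ?thesis
    using strict_monoD[OF strict_mono_Mk[of m, OF m2] greater] by (simp add: digit_def)
qed

lemma vilenkin_Mk:
  assumes "\<And>k. 2 \<le> m k"
  shows "vilenkin m (Mk m k) x = rademacher m k x"
proof -
  have "vilenkin m (Mk m k) x = (\<Prod>j<Mk m k. if j = k then rademacher m k x else 1)"
    unfolding vilenkin_def by (intro prod.cong refl) (simp add: digit_Mk[of m, OF assms])
  then show ?thesis
    using less_Mk[of m, OF assms, of k] by simp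
qed

lemma depends_on_prefix_vilenkin:
  assumes "\<And>k. 2 \<le> m k" and "i < Mk m k"
  shows "depends_on_prefix m k (vilenkin m i)"
  unfolding depends_on_prefix_def vilenkin_def
proof (intro ballI impI prod.cong refl)
  fix x y :: "nat \<Rightarrow> nat" and j
  assume "\<forall>j<k. x j = y j"
  then show "rademacher m j x ^ digit m i j = rademacher m j y ^ digit m i j"
    using digit_eq_0_if_less_Mk[of m, OF assms, of j]
    by (cases "j < k") (simp_all add: rademacher_def)
qed

section \<open>Atoms\<close>

definition atom :: "(nat \<Rightarrow> nat) \<Rightarrow> nat \<Rightarrow> real \<Rightarrow> (nat \<Rightarrow> nat) \<Rightarrow> complex" where
  "atom m k a x = (if \<forall>j<k. x j = 0 then of_real a * rademacher m k x else 0)"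

definition atom_martingale ::
    "(nat \<Rightarrow> nat) \<Rightarrow> nat \<Rightarrow> real \<Rightarrow> nat \<Rightarrow> (nat \<Rightarrow> nat) \<Rightarrow> complex" where
  "atom_martingale m k a n = (if n \<le> k then (\<lambda>_. 0) else atom m k a)"

lemma atom_eq_mult_rademacher:
  "atom m k a x = (if \<forall>j<k. x j = 0 then of_real a else 0) * rademacher m k x"
proof (cases "\<forall>j<k. x j = 0")
  case False
  then show ?thesis
    unfolding atom_def by (simp only: if_not_P[OF False]) simp
qed (simp add: atom_def)

lemma depends_on_prefix_atom: "depends_on_prefix m (Suc k) (atom m k a)"
  by (auto simp: depends_on_prefix_def atom_def rademacher_def)

lemma norm_atom: "cmod (atom m k a x) = (if \<forall>j<k. x j = 0 then \<bar>a\<bar> else 0)"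
proof (cases "\<forall>j<k. x j = 0")
  case False
  then show ?thesis
    unfolding atom_def by (simp only: if_not_P[OF False]) simp
qed (simp add: atom_def rademacher_def norm_mult)

lemma depends_on_prefix_if_prefix_zero:
  "depends_on_prefix m k (\<lambda>x. if \<forall>j<k. x j = 0 then c else 0)"
  unfolding depends_on_prefix_def
proof (intro ballI impI)
  fix x y :: "nat \<Rightarrow> nat" assume "\<forall>j<k. x j = y j"
  then have "(\<forall>j<k. x j = 0) \<longleftrightarrow> (\<forall>j<k. y j = 0)" by simp
  then show "(if \<forall>j<k. x j = 0 then c else 0) = (if \<forall>j<k. y j = 0 then c else 0)" by simp
qed

lemma integral_mult_atom_eq_0:
  fixes h :: "(nat \<Rightarrow> nat) \<Rightarrow> complex"
  assumes "\<And>k. 2 \<le> m k" and "depends_on_prefix m k h"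
  shows "integral\<^sup>L (Gm m) (\<lambda>x. h x * atom m k a x) = 0"
proof -
  have "depends_on_prefix m k (\<lambda>x. h x * (if \<forall>j<k. x j = 0 then complex_of_real a else 0))"
    by (rule depends_on_prefix_mult[OF assms(2) depends_on_prefix_if_prefix_zero])
  from integral_mult_rademacher_eq_0[of m, OF assms(1) this] show ?thesis
    by (simp add: atom_eq_mult_rademacher mult.assoc)
qed

lemma measurable_atom_martingale:
  assumes "\<And>k. 2 \<le> m k"
  shows "atom_martingale m k a n \<in> borel_measurable (Fn m n)"
proof (cases "n \<le> k")
  case False
  have m: "0 < m j" for j using assms[of j] by simp
  from False have "depends_on_prefix m n (atom m k a)"
    by (intro depends_on_prefix_mono[OF depends_on_prefix_atom]) simp
  with False show ?thesis
    by (simp add: atom_martingale_def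
        measurable_count_space_imp_borel[OF measurable_depends_on_prefix_Fn[OF m]])
qed (simp add: atom_martingale_def)

lemma integrable_atom:
  assumes "\<And>k. 2 \<le> m k"
  shows "integrable (Gm m) (atom m k a)"
proof -
  have m: "0 < m j" for j using assms[of j] by simp
  interpret prob_space "Gm m" by (rule prob_space_Gm[OF m])
  have "atom m k a \<in> borel_measurable (Gm m)"
    by (rule measurable_count_space_imp_borel[OF measurable_depends_on_prefix_Gm[OF m depends_on_prefix_atom]])
  then show ?thesis
    by (intro integrable_const_bound[where B="\<bar>a\<bar>"]) (simp_all add: norm_atom)
qed

lemma set_integral_atom_eq_0:
  assumes m2: "\<And>k. 2 \<le> m k" and A: "A \<in> sets (Fn m k)"
  shows "(LINT x:A|Gm m. atom m k a x) = 0"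
proof -
  have "depends_on_prefix m k (indicator A :: _ \<Rightarrow> complex)"
    using depends_on_prefix_comp[OF depends_on_prefix_mem_Fn[OF A], of of_bool]
    unfolding indicator_def[abs_def] by simp
  then show ?thesis
    unfolding set_lebesgue_integral_def
    using integral_mult_atom_eq_0[of m, OF m2, where h="indicator A"]
    by (simp add: scaleR_conv_of_real of_real_indicator)
qed

lemma martingale_atom_martingale:
  assumes m2: "\<And>k. 2 \<le> m k"
  shows "martingale m (atom_martingale m k a)"
  unfolding martingale_def
proof (intro conjI allI ballI)
  fix n
  show "atom_martingale m k a n \<in> borel_measurable (Fn m n)"
    by (rule measurable_atom_martingale[of m, OF m2])
  show "integrable (Gm m) (atom_martingale m k a n)"
    using integrable_atom[of m, OF m2] by (simp add: atom_martingale_def)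
  fix A assume A: "A \<in> sets (Fn m n)"
  show "(LINT x:A|Gm m. atom_martingale m k a (Suc n) x) = (LINT x:A|Gm m. atom_martingale m k a n x)"
  proof (cases n k rule: linorder_cases)
    case equal
    with set_integral_atom_eq_0[of m, OF m2] A show ?thesis
      by (simp add: atom_martingale_def)
  qed (simp_all add: atom_martingale_def)
qed

lemma ennpow_ennreal: "0 \<le> c \<Longrightarrow> ennpow (ennreal c) r = ennreal (c powr r)"
  by (simp add: ennpow_def)

lemma maxfun_atom_martingale: "maxfun (atom_martingale m k a) x = ennreal (cmod (atom m k a x))"
  unfolding maxfun_def
proof (rule antisym)
  show "(SUP n. ennreal (cmod (atom_martingale m k a n x))) \<le> ennreal (cmod (atom m k a x))"
    by (rule SUP_least) (auto simp: atom_martingale_def)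
  show "ennreal (cmod (atom m k a x)) \<le> (SUP n. ennreal (cmod (atom_martingale m k a n x)))"
    by (rule SUP_upper2[of "Suc k"]) (auto simp: atom_martingale_def)
qed

lemma Hp_norm_atom_martingale:
  assumes m2: "\<And>k. 2 \<le> m k" and p: "0 < p"
  shows "Hp_norm m p (atom_martingale m k (real (Mk m k) powr (1/p))) = 1"
proof -
  have m: "0 < m j" for j using m2[of j] by simp
  define a where "a = real (Mk m k) powr (1/p)"
  have M: "0 < real (Mk m k)" using Mk_pos[OF m] by simp
  then have a_p: "a powr p = real (Mk m k)"
    using p by (simp add: a_def powr_powr)
  let ?I = "Interval m k (\<lambda>_. 0)"
  have zero: "(\<lambda>_. 0) \<in> space (Gm m)" using m by (simp add: space_Gm)
  have "ennpow (maxfun (atom_martingale m k a) x) p = ennreal (real (Mk m k)) * indicator ?I x"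
    if x: "x \<in> space (Gm m)" for x
  proof (cases "\<forall>j<k. x j = 0")
    case True
    with x have "x \<in> ?I" by (simp add: Interval_def)
    with True a_p show ?thesis
      by (simp add: maxfun_atom_martingale ennpow_ennreal norm_atom a_def)
  next
    case False
    with x have "x \<notin> ?I" by (auto simp: Interval_def)
    moreover have "cmod (atom m k a x) = 0"
      by (simp only: norm_atom if_not_P[OF False])
    ultimately show ?thesis
      using p by (simp add: maxfun_atom_martingale ennpow_def)
  qed
  then have "(\<integral>\<^sup>+x. ennpow (maxfun (atom_martingale m k a) x) p \<partial>Gm m) =
      (\<integral>\<^sup>+x. ennreal (real (Mk m k)) * indicator ?I x \<partial>Gm m)"
    by (rule nn_integral_cong)
  also have "\<dots> = ennreal (real (Mk m k)) * ennreal (1 / real (Mk m k))"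
    by (simp add: nn_integral_cmult_indicator[OF Interval_in_sets[OF zero]] emeasure_Interval[OF m zero])
  also have "\<dots> = 1"
    using M by (simp add: ennreal_mult'[symmetric])
  finally show ?thesis
    unfolding Hp_norm_def a_def by (simp add: ennpow_def)
qed

section \<open>Fejer means of atoms and their weak quasinorms\<close>

lemma rademacher_mult_cnj: "rademacher m k x * cnj (rademacher m k x) = 1"
proof -
  have "cmod (rademacher m k x) = 1"
    by (simp add: rademacher_def)
  with complex_norm_square[of "rademacher m k x"] show ?thesis
    by simp
qed

lemma fourier_coeff_atom_martingale:
  "fourier_coeff m (atom_martingale m k a) i = integral\<^sup>L (Gm m) (\<lambda>x. cnj (vilenkin m i x) * atom m k a x)"
  unfolding fourier_coeff_def
  by (rule limI, rule tendsto_eventually, rule eventually_sequentiallyI[of "Suc k"])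
    (simp add: atom_martingale_def mult.commute)

lemma fourier_coeff_atom_martingale_less_Mk:
  assumes "\<And>k. 2 \<le> m k" and "i < Mk m k"
  shows "fourier_coeff m (atom_martingale m k a) i = 0"
proof -
  have "depends_on_prefix m k (\<lambda>x. cnj (vilenkin m i x))"
    by (rule depends_on_prefix_comp[OF depends_on_prefix_vilenkin[of m, OF assms]])
  then show ?thesis
    unfolding fourier_coeff_atom_martingale by (rule integral_mult_atom_eq_0[of m, OF assms(1)])
qed

lemma fourier_coeff_atom_martingale_Mk:
  assumes m2: "\<And>k. 2 \<le> m k"
  shows "fourier_coeff m (atom_martingale m k a) (Mk m k) = of_real (a / real (Mk m k))"
proof -
  have m: "0 < m j" for j using m2[of j] by simp
  let ?h = "\<lambda>x::nat \<Rightarrow> nat. if \<forall>j<k. x j = 0 then complex_of_real a else 0"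
  have "cnj (rademacher m k x) * atom m k a x = ?h x * (rademacher m k x * cnj (rademacher m k x))" for x
    by (simp only: atom_eq_mult_rademacher ac_simps)
  then have "cnj (rademacher m k x) * atom m k a x = ?h x" for x
    by (simp only: rademacher_mult_cnj mult_1_right)
  then have "fourier_coeff m (atom_martingale m k a) (Mk m k) = integral\<^sup>L (Gm m) ?h"
    by (simp add: fourier_coeff_atom_martingale vilenkin_Mk[of m, OF m2])
  also have "\<dots> = (1 / real (Mk m k)) *\<^sub>R (\<Sum>z\<in>prefix_points m k. ?h z)"
    by (rule integral_depends_on_prefix[OF m]) (auto simp: depends_on_prefix_def)
  also have "(\<Sum>z\<in>prefix_points m k. ?h z) = (\<Sum>z\<in>prefix_points m k. if z = (\<lambda>_. 0) then of_real a else 0)"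
  proof (rule sum.cong[OF refl])
    fix z assume "z \<in> prefix_points m k"
    then have "\<forall>j\<ge>k. z j = 0"
      by (simp add: prefix_points_def)
    then have "(\<forall>j<k. z j = 0) = (z = (\<lambda>_. 0))"
      unfolding fun_eq_iff by (meson not_less)
    then show "?h z = (if z = (\<lambda>_. 0) then of_real a else 0)"
      by (simp only:)
  qed
  also have "\<dots> = of_real a"
    using finite_prefix_points m by (simp add: prefix_points_def space_Gm)
  finally show ?thesis
    by (simp add: scaleR_conv_of_real)
qed

lemma partial_sum_atom_martingale_le_Mk:
  assumes "\<And>k. 2 \<le> m k" and "j \<le> Mk m k"
  shows "partial_sum m (atom_martingale m k a) j x = 0"
  unfolding partial_sum_def using assms
  by (intro sum.neutral) (auto simp: fourier_coeff_atom_martingale_less_Mk)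

lemma partial_sum_atom_martingale_Suc_Mk:
  assumes "\<And>k. 2 \<le> m k"
  shows "partial_sum m (atom_martingale m k a) (Suc (Mk m k)) x =
    of_real (a / real (Mk m k)) * rademacher m k x"
proof -
  have "partial_sum m (atom_martingale m k a) (Suc (Mk m k)) x =
      partial_sum m (atom_martingale m k a) (Mk m k) x +
      fourier_coeff m (atom_martingale m k a) (Mk m k) * vilenkin m (Mk m k) x"
    by (simp add: partial_sum_def)
  then show ?thesis
    by (simp add: partial_sum_atom_martingale_le_Mk[of m, OF assms]
        fourier_coeff_atom_martingale_Mk[of m, OF assms] vilenkin_Mk[of m, OF assms])
qed

lemma fejer_mean_atom_martingale:
  assumes "\<And>k. 2 \<le> m k"
  shows "fejer_mean m (atom_martingale m k a) (Mk m k + 2) x =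
    of_real (a / real (Mk m k)) * rademacher m k x / of_nat (Mk m k + 2)"
proof -
  have "(\<Sum>j<Mk m k + 2. partial_sum m (atom_martingale m k a) j x) =
      (\<Sum>j<Mk m k. partial_sum m (atom_martingale m k a) j x) +
      partial_sum m (atom_martingale m k a) (Mk m k) x +
      partial_sum m (atom_martingale m k a) (Suc (Mk m k)) x"
    by (simp add: numeral_2_eq_2)
  also have "\<dots> = of_real (a / real (Mk m k)) * rademacher m k x"
    by (simp add: partial_sum_atom_martingale_le_Mk[of m, OF assms]
        partial_sum_atom_martingale_Suc_Mk[of m, OF assms])
  finally show ?thesis
    by (simp add: fejer_mean_def)
qed

lemma ennpow_mono:
  assumes "x \<le> y" and "0 \<le> r"
  shows "ennpow x r \<le> ennpow y r"
proof (cases "y = \<infinity>")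
  case False
  with assms show ?thesis
    by (auto simp: ennpow_def top_unique less_top intro!: ennreal_leI powr_mono2 enn2real_mono)
qed (simp add: ennpow_def)

lemma weak_Lp_norm_ge_half:
  assumes "prob_space M" and "0 < p" and "0 < C" and "\<And>x. x \<in> space M \<Longrightarrow> C \<le> cmod (g x)"
  shows "ennreal (C / 2) \<le> weak_Lp_norm M p g"
proof -
  interpret prob_space M by (rule assms(1))
  have "{x \<in> space M. C / 2 < cmod (g x)} = space M"
    using assms(3,4) by force
  then have "ennreal ((C/2) powr p) \<le> (SUP t\<in>{0<..}. ennreal (t powr p) * emeasure M {x \<in> space M. t < cmod (g x)})"
    using assms(3) by (intro SUP_upper2[of "C/2"]) (auto simp: emeasure_space_1)
  then have "ennpow (ennreal ((C/2) powr p)) (1/p) \<le> weak_Lp_norm M p g"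
    unfolding weak_Lp_norm_def using assms(2) by (intro ennpow_mono) auto
  then show ?thesis
    using assms(2,3) by (simp add: ennpow_ennreal powr_powr)
qed

lemma weak_Lp_norm_fejer_mean_atom_ge:
  assumes m2: "\<And>k. 2 \<le> m k" and p: "0 < p" and \<phi>: "0 < \<phi> (Mk m k + 2)"
  shows "ennreal (real (Mk m k) powr (1/p - 2) / (6 * \<phi> (Mk m k + 2))) \<le>
    weak_Lp_norm (Gm m) p (\<lambda>x. fejer_mean m (atom_martingale m k (real (Mk m k) powr (1/p))) (Mk m k + 2) x
      / of_real (\<phi> (Mk m k + 2)))"
proof -
  have m: "0 < m j" for j using m2[of j] by simp
  define M where "M = real (Mk m k)"
  define c where "c = \<phi> (Mk m k + 2)"
  have M: "1 \<le> M" using Mk_pos[of m, OF m, of k] by (simp add: M_def)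
  have "M powr (1/p) = M powr (1/p - 2 + 2)" by simp
  also have "\<dots> = M powr (1/p - 2) * M powr 2"
    by (rule powr_add)
  also have "M powr 2 = M * M"
    using M by (simp add: powr_numeral power2_eq_square)
  finally have eq: "M powr (1/p) / M / (M + 2) / c = M powr (1/p - 2) * (M / (M + 2)) / c"
    using M by simp
  have c: "0 < c" using \<phi> by (simp add: c_def)
  have "M powr (1/p - 2) / (3 * c) = M powr (1/p - 2) * (1 / 3) / c"
    by simp
  also have "\<dots> \<le> M powr (1/p - 2) * (M / (M + 2)) / c"
    using M c by (intro divide_right_mono mult_left_mono) (simp_all add: field_simps)
  finally have "M powr (1/p - 2) / (3 * c) \<le> M powr (1/p) / M / (M + 2) / c"
    unfolding eq .
  moreover have "cmod (fejer_mean m (atom_martingale m k (M powr (1/p))) (Mk m k + 2) x / of_real c) =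
      M powr (1/p) / M / (M + 2) / c" for x
    unfolding fejer_mean_atom_martingale[of m, OF m2] norm_divide norm_mult norm_of_real norm_of_nat
    using M c by (simp add: M_def rademacher_def)
  ultimately have "ennreal (M powr (1/p - 2) / (3 * c) / 2) \<le>
      weak_Lp_norm (Gm m) p (\<lambda>x. fejer_mean m (atom_martingale m k (M powr (1/p))) (Mk m k + 2) x / of_real c)"
    using M c p by (intro weak_Lp_norm_ge_half prob_space_Gm m) simp_all
  then show ?thesis
    by (simp add: M_def c_def)
qed

section \<open>Growth along the sequence \<open>M\<^sub>k\<close>\<close>

lemma limsup_eq_infinity_imp_exists_gt:
  fixes X :: "nat \<Rightarrow> real"
  assumes "limsup (\<lambda>n. ereal (X n)) = \<infinity>"
  shows "\<exists>n\<ge>N. L < X n"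
proof (rule ccontr)
  assume "\<not> (\<exists>n\<ge>N. L < X n)"
  then have "eventually (\<lambda>n. ereal (X n) \<le> ereal L) sequentially"
    by (intro eventually_sequentiallyI[of N]) auto
  then have "limsup (\<lambda>n. ereal (X n)) \<le> ereal L"
    by (rule Limsup_bounded)
  with assms show False by simp
qed

lemma strict_mono_exists_bracket:
  fixes M :: "nat \<Rightarrow> nat"
  assumes "strict_mono M" and "M 0 \<le> n"
  shows "\<exists>k. M k \<le> n \<and> n < M (Suc k)"
proof -
  define S where "S = {k. M k \<le> n}"
  have "S \<subseteq> {..n}"
    using strict_mono_imp_increasing[OF assms(1)] by (auto simp: S_def intro: le_trans)
  then have S: "finite S"
    by (rule finite_subset) simp
  moreover have "0 \<in> S"
    using assms(2) by (simp add: S_def)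
  ultimately have "Max S \<in> S"
    by (auto intro: Max_in)
  moreover have "Suc (Max S) \<notin> S"
    using Max_ge[OF S, of "Suc (Max S)"] by auto
  ultimately show ?thesis
    by (auto simp: S_def not_le)
qed

text \<open>Bounded ratios \<open>M (k + 1) \<le> B M k\<close> make every \<open>n\<close> comparable to the largest \<open>M k \<le> n - 2\<close>,
  so the \<open>limsup\<close> along all \<open>n\<close> is already attained along the sequence \<open>M\<close>.\<close>

lemma exists_powr_div_gt_along_sequence:
  fixes M :: "nat \<Rightarrow> nat" and \<phi> :: "nat \<Rightarrow> real"
  assumes M: "strict_mono M" "M 0 = 1" "\<And>k. M (Suc k) \<le> B * M k"
    and q: "0 < q" and \<phi>: "\<And>n. 0 < \<phi> n" "mono \<phi>"
    and limsup: "limsup (\<lambda>n. ereal ((real n + 1) powr q / \<phi> n)) = \<infinity>"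
  shows "\<exists>k. L < real (M k) powr q / \<phi> (M k + 2)"
proof -
  define c where "c = real B + 2"
  have c: "0 < c" by (simp add: c_def)
  obtain n where n: "n \<ge> 3" and n_gt: "max L 0 * c powr q < (real n + 1) powr q / \<phi> n"
    using limsup_eq_infinity_imp_exists_gt[OF limsup] by blast
  have "M 0 \<le> n - 2"
    using n M(2) by simp
  then obtain k where k: "M k \<le> n - 2" "n - 2 < M (Suc k)"
    using strict_mono_exists_bracket[OF M(1)] by blast
  have "1 \<le> M k"
    using strict_mono_less_eq[OF M(1), of 0 k] M(2) by simp
  with k(2) M(3)[of k] have "n + 1 \<le> B * M k + 2 * M k"
    by linarith
  then have "real n + 1 \<le> c * real (M k)"
    unfolding c_def by (simp add: distrib_right flip: of_nat_mult of_nat_add of_nat_le_iff)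
  then have "(real n + 1) / c \<le> real (M k)"
    using c by (simp add: pos_divide_le_eq mult.commute)
  then have "((real n + 1) / c) powr q \<le> real (M k) powr q"
    using q c by (intro powr_mono2) simp_all
  then have le_M: "(real n + 1) powr q / c powr q \<le> real (M k) powr q"
    using c by (simp add: powr_divide)
  have "L \<le> max L 0"
    by simp
  also have "\<dots> < (real n + 1) powr q / \<phi> n / c powr q"
    by (rule pos_less_divide_eq[THEN iffD2]) (use c n_gt in auto)
  also have "\<dots> = (real n + 1) powr q / c powr q / \<phi> n"
    by simp
  also have "\<dots> \<le> real (M k) powr q / \<phi> n"
    by (rule divide_right_mono[OF le_M]) (simp add: less_imp_le[OF \<phi>(1)])
  also have "\<dots> \<le> real (M k) powr q / \<phi> (M k + 2)"
    using \<phi>(1) monoD[OF \<phi>(2), of "M k + 2" n] k(1) n by (intro divide_left_mono) simp_all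
  finally show ?thesis ..
qed

lemma exists_Mk_powr_div_gt:
  assumes "bounded_generating m" and "0 < q" and "\<And>n. 0 < \<phi> n" and "mono \<phi>"
    and "limsup (\<lambda>n. ereal ((real n + 1) powr q / \<phi> n)) = \<infinity>"
  shows "\<exists>k. L < real (Mk m k) powr q / \<phi> (Mk m k + 2)"
proof -
  from assms(1) have m2: "\<And>k. 2 \<le> m k" and "bdd_above (range m)"
    by (auto simp: bounded_generating_def)
  then obtain B where "\<And>k. m k \<le> B"
    by (auto simp: bdd_above_def)
  then have "Mk m (Suc k) \<le> B * Mk m k" for k
    by (simp add: Mk_Suc)
  moreover have "Mk m 0 = 1"
    by (simp add: Mk_def)
  ultimately show ?thesis
    using exists_powr_div_gt_along_sequence[OF strict_mono_Mk[of m, OF m2]] assms(2-5) by blast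
qed

lemma SUP_eq_top_if_unbounded:
  fixes X :: "nat \<Rightarrow> real" and T :: ennreal
  assumes "\<And>L. \<exists>k. L < X k" and "\<And>k. ennreal (X k) \<le> T"
  shows "T = \<infinity>"
proof (rule ccontr)
  assume "T \<noteq> \<infinity>"
  then obtain r where r: "T = ennreal r" "0 \<le> r"
    using ennreal_cases[of T] by auto
  obtain k where "r < X k" using assms(1) by blast
  then have "ennreal r < ennreal (X k)"
    using r(2) by (simp add: ennreal_lessI)
  with assms(2)[of k] r(1) show False by simp
qed

theorem theorem2:
  fixes m :: "nat \<Rightarrow> nat" and p :: real and \<phi> :: "nat \<Rightarrow> real"
  assumes "0 < p" and "p < 1/2"
    and "bounded_generating m"
    and "\<And>n. 1 \<le> \<phi> n" and "mono \<phi>"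
    and "limsup (\<lambda>n. ereal ((real n + 1) powr (1/p - 2) / \<phi> n)) = \<infinity>"
  shows "(SUP f \<in> {f. martingale m f \<and> Hp_norm m p f \<le> 1}.
            SUP n \<in> {1..}. weak_Lp_norm (Gm m) p (\<lambda>x. fejer_mean m f n x / of_real (\<phi> n))) = \<infinity>"
proof (rule SUP_eq_top_if_unbounded)
  have m2: "\<And>k. 2 \<le> m k"
    using assms(3) by (simp add: bounded_generating_def)
  have \<phi>: "0 < \<phi> n" for n
    using assms(4)[of n] by simp
  show "\<exists>k. L < real (Mk m k) powr (1/p - 2) / (6 * \<phi> (Mk m k + 2))" for L
  proof -
    have "0 < 1/p - 2"
      using assms(1,2) by (simp add: field_simps)
    with exists_Mk_powr_div_gt[OF assms(3)] \<phi> assms(5,6) obtain k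
      where "6 * L < real (Mk m k) powr (1/p - 2) / \<phi> (Mk m k + 2)" by blast
    with \<phi>[of "Mk m k + 2"] have "L < real (Mk m k) powr (1/p - 2) / (6 * \<phi> (Mk m k + 2))"
      by (simp add: field_simps)
    then show ?thesis ..
  qed
  fix k
  let ?f = "atom_martingale m k (real (Mk m k) powr (1/p))"
  have "ennreal (real (Mk m k) powr (1/p - 2) / (6 * \<phi> (Mk m k + 2))) \<le>
      (SUP n \<in> {1..}. weak_Lp_norm (Gm m) p (\<lambda>x. fejer_mean m ?f n x / of_real (\<phi> n)))"
    by (rule order_trans[OF weak_Lp_norm_fejer_mean_atom_ge[of m, OF m2 assms(1) \<phi>]])
      (rule SUP_upper, simp)
  also have "\<dots> \<le> (SUP f \<in> {f. martingale m f \<and> Hp_norm m p f \<le> 1}.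
      SUP n \<in> {1..}. weak_Lp_norm (Gm m) p (\<lambda>x. fejer_mean m f n x / of_real (\<phi> n)))"
    by (rule SUP_upper)
      (simp add: martingale_atom_martingale[of m, OF m2] Hp_norm_atom_martingale[of m, OF m2 assms(1)])
  finally show "ennreal (real (Mk m k) powr (1/p - 2) / (6 * \<phi> (Mk m k + 2))) \<le> \<dots>" .
qed

end
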